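(* Let $n$ be a positive integer and let $S\subseteq V(Q_n)$ be a set of vertices that are pairwise at distance at most $2$ in $Q_n$. Then either (a) $S\subseteq N_{Q_n}[v]$ for some $v\in V(Q_n)$, or (b) $S$ is the vertex set of a $4$-cycle (square) of $Q_n$, or (c) $S$ consists of four vertices forming one of the two partite sets (color classes of the bipartition) of some subgraph of $Q_n$ isomorphic to $Q_3$.
   Context: $Q_n$ is the $n$-dimensional hypercube: vertices are binary $n$-tuples, two being adjacent iff they differ in exactly one coordinate; distance is the graph distance (Hamming distance). $N_{Q_n}[v]$ is the closed neighborhood of $v$ (i.e., $v$ and its neighbors). *)

theory Defs
  imports Main
begin

definition hc_verts :: "nat \<Rightarrow> bool list set" where
  "hc_verts n = {x. length x = n}"

text \<open>Hamming distance (= graph distance in Q_n for tuples of equal length).\<close>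
definition hdist :: "bool list \<Rightarrow> bool list \<Rightarrow> nat" where
  "hdist x y = card {i. i < length x \<and> x ! i \<noteq> y ! i}"

definition hc_adj :: "bool list \<Rightarrow> bool list \<Rightarrow> bool" where
  "hc_adj x y \<longleftrightarrow> hdist x y = 1"

definition hc_closed_nbhd :: "nat \<Rightarrow> bool list \<Rightarrow> bool list set" where
  "hc_closed_nbhd n v = {u \<in> hc_verts n. u = v \<or> hc_adj u v}"

definition hc_square :: "nat \<Rightarrow> bool list set \<Rightarrow> bool" where
  "hc_square n S \<longleftrightarrow> (\<exists>a b c d. a \<in> hc_verts n \<and> b \<in> hc_verts n \<and> c \<in> hc_verts n \<and> d \<in> hc_verts n
     \<and> distinct [a, b, c, d]
     \<and> hc_adj a b \<and> hc_adj b c \<and> hc_adj c d \<and> hc_adj d a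
     \<and> S = {a, b, c, d})"

text \<open>A subgraph of Q_n isomorphic to Q_3 is given by an injective map from V(Q_3) into V(Q_n)
  sending edges of Q_3 to edges of Q_n (the isomorphism onto the subgraph).\<close>
definition hc_Q3_embedding :: "nat \<Rightarrow> (bool list \<Rightarrow> bool list) \<Rightarrow> bool" where
  "hc_Q3_embedding n f \<longleftrightarrow>
     f ` hc_verts 3 \<subseteq> hc_verts n \<and> inj_on f (hc_verts 3) \<and>
     (\<forall>x\<in>hc_verts 3. \<forall>y\<in>hc_verts 3. hc_adj x y \<longrightarrow> hc_adj (f x) (f y))"

text \<open>The two partite sets (colour classes) of Q_3: vertices of even / odd weight.\<close>
definition Q3_part :: "bool \<Rightarrow> bool list set" where
  "Q3_part p = {x \<in> hc_verts 3. even (hdist x (replicate 3 False)) = p}"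

definition hc_Q3_half :: "nat \<Rightarrow> bool list set \<Rightarrow> bool" where
  "hc_Q3_half n S \<longleftrightarrow> card S = 4 \<and>
     (\<exists>f p. hc_Q3_embedding n f \<and> S = f ` Q3_part p)"

end

theory Submission
  imports Defs
begin

text \<open>Translate S by one of its vertices x: each u becomes the set of coordinates in which it
  differs from x. This gives a family of sets containing the empty set with pairwise symmetric
  differences of size at most two. Hence its members have at most two elements, any two
  two-element members meet, and every singleton member lies in every two-element member.
  So either some point lies in all nonempty members (or no member has two elements), which gives
  the centre of a closed neighbourhood; or the family is {{},{i},{j},{i,j}}, a square; or it is
  {{},{i,j},{j,k},{i,k}}, the even half of the 3-cube spanned by the coordinates i, j, k.\<close>

lemma card_le_2_cases:
  assumes "finite A" "card A \<le> 2"
  shows "A = {} \<or> (\<exists>a. A = {a}) \<or> (\<exists>a b. a \<noteq> b \<and> A = {a, b})"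
  using assms by (metis card_1_singleton_iff card_2_iff card_0_eq le_Suc_eq numeral_2_eq_2 le_zero_eq)

locale sym_diff_diameter_2 =
  fixes F :: "'a set set"
  assumes empty_mem: "{} \<in> F"
    and finite_mem: "A \<in> F \<Longrightarrow> finite A"
    and card_sym_diff_le_2: "A \<in> F \<Longrightarrow> B \<in> F \<Longrightarrow> card (sym_diff A B) \<le> 2"
begin

lemma mem_cases:
  assumes "A \<in> F"
  obtains "A = {}" | a where "A = {a}" | a b where "a \<noteq> b" "A = {a, b}"
  using card_le_2_cases[OF finite_mem[OF assms]] card_sym_diff_le_2[OF assms empty_mem] by auto

lemma singleton_mem_doubleton:
  assumes "{i} \<in> F" "{a, b} \<in> F" "a \<noteq> b"
  shows "i \<in> {a, b}"
  using card_sym_diff_le_2[OF assms(1,2)] assms(3) by (auto simp: insert_Diff_if split: if_splits)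

lemma doubletons_intersect:
  assumes "{a, b} \<in> F" "{c, d} \<in> F" "a \<noteq> b" "c \<noteq> d"
  shows "{a, b} \<inter> {c, d} \<noteq> {}"
  using card_sym_diff_le_2[OF assms(1,2)] assms(3,4) by (auto simp: insert_Diff_if split: if_splits)

lemma eq_square:
  assumes "{p} \<in> F" "{q} \<in> F" "{p, q} \<in> F" "p \<noteq> q"
  shows "F = {{}, {p}, {q}, {p, q}}"
proof
  show "F \<subseteq> {{}, {p}, {q}, {p, q}}"
  proof
    fix A assume "A \<in> F"
    then show "A \<in> {{}, {p}, {q}, {p, q}}"
    proof (cases rule: mem_cases)
      case (2 a)
      then show ?thesis using singleton_mem_doubleton[of a p q] \<open>A \<in> F\<close> assms by auto
    next
      case (3 a b)
      then show ?thesis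
        using singleton_mem_doubleton[of p a b] singleton_mem_doubleton[of q a b] \<open>A \<in> F\<close> assms
        by (auto simp: doubleton_eq_iff)
    qed simp
  qed
qed (use assms empty_mem in simp)

lemma eq_triangle:
  assumes "{p, q} \<in> F" "{q, r} \<in> F" "{p, r} \<in> F" "p \<noteq> q" "q \<noteq> r" "p \<noteq> r"
  shows "F = {{}, {p, q}, {q, r}, {p, r}}"
proof
  show "F \<subseteq> {{}, {p, q}, {q, r}, {p, r}}"
  proof
    fix A assume "A \<in> F"
    then show "A \<in> {{}, {p, q}, {q, r}, {p, r}}"
    proof (cases rule: mem_cases)
      case (2 a)
      then show ?thesis
        using singleton_mem_doubleton[of a p q] singleton_mem_doubleton[of a q r]
          singleton_mem_doubleton[of a p r] \<open>A \<in> F\<close> assms by auto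
    next
      case (3 a b)
      then show ?thesis
        using doubletons_intersect[of a b p q] doubletons_intersect[of a b q r]
          doubletons_intersect[of a b p r] \<open>A \<in> F\<close> assms
        by (auto simp: doubleton_eq_iff)
    qed simp
  qed
qed (use assms empty_mem in simp)

lemma mem_avoiding_cases:
  assumes "{p, q} \<in> F" "p \<noteq> q" "B \<in> F" "B \<noteq> {}" "p \<notin> B"
  obtains "B = {q}" | r where "B = {q, r}" "r \<noteq> p" "r \<noteq> q"
  using assms(3)
proof (cases rule: mem_cases)
  case (2 a)
  then have "a = q" using singleton_mem_doubleton[of a p q] assms by auto
  then show thesis using that(1) 2 by simp
next
  case (3 a b)
  then have "q \<in> {a, b}" using doubletons_intersect[of a b p q] assms by auto
  then show thesis using that(2)[of a] that(2)[of b] 3 assms by (auto simp: insert_commute)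
qed (use assms in simp)

lemma square_or_triangle_if_no_common_point:
  assumes pq: "{p, q} \<in> F" "p \<noteq> q"
    and no_common_point: "\<nexists>r. \<forall>A\<in>F. A \<noteq> {} \<longrightarrow> r \<in> A"
  shows "(\<exists>i j. i \<noteq> j \<and> F = {{}, {i}, {j}, {i, j}})
    \<or> (\<exists>i j k. i \<noteq> j \<and> j \<noteq> k \<and> i \<noteq> k \<and> F = {{}, {i, j}, {j, k}, {i, k}})"
proof -
  obtain B1 B2 where B1: "B1 \<in> F" "B1 \<noteq> {}" "p \<notin> B1"
    and B2: "B2 \<in> F" "B2 \<noteq> {}" "q \<notin> B2"
    using no_common_point by blast
  have qp: "{q, p} \<in> F" "q \<noteq> p"
    using pq by (simp_all add: insert_commute)
  show ?thesis
  proof (cases rule: mem_avoiding_cases[OF pq B1])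
    case 1
    then show ?thesis
    proof (cases rule: mem_avoiding_cases[OF qp B2])
      case 1
      then have "F = {{}, {q}, {p}, {q, p}}"
        using eq_square \<open>B1 = {q}\<close> B1 B2 qp by simp
      then show ?thesis using qp by blast
    next
      case (2 s)
      then show ?thesis
        using singleton_mem_doubleton[of q p s] \<open>B1 = {q}\<close> B1 B2 qp by auto
    qed
  next
    case (2 r)
    note r = this
    show ?thesis
    proof (cases rule: mem_avoiding_cases[OF qp B2])
      case 1
      then show ?thesis using singleton_mem_doubleton[of p q r] r B1 B2 pq by auto
    next
      case (2 s)
      then have "r = s" using doubletons_intersect[of q r p s] r B1 B2 pq by auto
      then have "{q, r} \<in> F" "{p, r} \<in> F" using r 2 B1 B2 by auto
      then have "F = {{}, {p, q}, {q, r}, {p, r}}" using eq_triangle pq r by simp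
      then show ?thesis using pq r by (intro disjI2 exI[of _ p] exI[of _ q] exI[of _ r]) simp
    qed
  qed
qed

lemma center_or_square_or_triangle:
  "(\<exists>C \<subseteq> \<Union>F. \<forall>A\<in>F. card (sym_diff A C) \<le> 1)
   \<or> (\<exists>i j. i \<noteq> j \<and> F = {{}, {i}, {j}, {i, j}})
   \<or> (\<exists>i j k. i \<noteq> j \<and> j \<noteq> k \<and> i \<noteq> k \<and> F = {{}, {i, j}, {j, k}, {i, k}})"
proof (cases "\<forall>A\<in>F. card A \<le> 1")
  case True
  then have "\<forall>A\<in>F. card (sym_diff A {}) \<le> 1" by simp
  then show ?thesis by blast
next
  case False
  then obtain B where B: "B \<in> F" "card B > 1" by auto
  from B(1) obtain p q where pq: "{p, q} \<in> F" "p \<noteq> q"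
  proof (cases rule: mem_cases)
    case (3 a b)
    then show thesis using that B by blast
  qed (use B in auto)
  show ?thesis
  proof (cases "\<exists>r. \<forall>A\<in>F. A \<noteq> {} \<longrightarrow> r \<in> A")
    case True
    then obtain r where r: "\<forall>A\<in>F. A \<noteq> {} \<longrightarrow> r \<in> A" by blast
    then have "r \<in> \<Union>F"
      using pq(1) by (metis UnionI insert_not_empty)
    have "card (sym_diff A {r}) \<le> 1" if "A \<in> F" for A
    proof -
      have "A \<noteq> {} \<longrightarrow> r \<in> A" using that r by blast
      with that show ?thesis by (cases rule: mem_cases) (auto simp: insert_Diff_if)
    qed
    then show ?thesis using \<open>r \<in> \<Union>F\<close> by (intro disjI1 exI[of _ "{r}"]) auto
  next
    case False
    from square_or_triangle_if_no_common_point[OF pq False] show ?thesis by (rule disjI2)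
  qed
qed

end

definition diff_coords :: "bool list \<Rightarrow> bool list \<Rightarrow> nat set" where
  "diff_coords x y = {i. i < length x \<and> x ! i \<noteq> y ! i}"

definition flip_coords :: "bool list \<Rightarrow> nat set \<Rightarrow> bool list" where
  "flip_coords x A = map (\<lambda>i. if i \<in> A then \<not> x ! i else x ! i) [0..<length x]"

lemma hdist_eq_card_diff_coords: "hdist x y = card (diff_coords x y)"
  by (simp add: hdist_def diff_coords_def)

lemma finite_diff_coords [simp]: "finite (diff_coords x y)"
  by (simp add: diff_coords_def)

lemma diff_coords_subset: "diff_coords x y \<subseteq> {..<length x}"
  by (auto simp: diff_coords_def)

lemma length_flip_coords [simp]: "length (flip_coords x A) = length x"
  by (simp add: flip_coords_def)

lemma diff_coords_flip_coords: "diff_coords x (flip_coords x A) = A \<inter> {..<length x}"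
  by (auto simp: diff_coords_def flip_coords_def)

lemma flip_coords_diff_coords: "length y = length x \<Longrightarrow> flip_coords x (diff_coords x y) = y"
  by (auto simp: diff_coords_def flip_coords_def intro!: nth_equalityI)

lemma diff_coords_eq_sym_diff:
  "length y = length x \<Longrightarrow> length z = length x \<Longrightarrow>
   diff_coords y z = sym_diff (diff_coords x y) (diff_coords x z)"
  by (auto simp: diff_coords_def)

lemma hdist_flip_coords:
  assumes "A \<subseteq> {..<length x}" "B \<subseteq> {..<length x}"
  shows "hdist (flip_coords x A) (flip_coords x B) = card (sym_diff A B)"
  using diff_coords_eq_sym_diff[of "flip_coords x A" x "flip_coords x B"] assms
  by (simp add: hdist_eq_card_diff_coords diff_coords_flip_coords Int_absorb2)

lemma inj_on_flip_coords: "inj_on (flip_coords x) (Pow {..<length x})"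
  by (rule inj_onI) (metis PowD diff_coords_flip_coords Int_absorb2)

lemma hdist_eq_0_iff: "length x = length y \<Longrightarrow> hdist x y = 0 \<longleftrightarrow> x = y"
  by (auto simp: hdist_eq_card_diff_coords diff_coords_def intro!: nth_equalityI)

lemma mem_hc_closed_nbhd_iff:
  assumes "v \<in> hc_verts n"
  shows "u \<in> hc_closed_nbhd n v \<longleftrightarrow> u \<in> hc_verts n \<and> hdist u v \<le> 1"
  using assms hdist_eq_0_iff[of u v]
  by (auto simp: hc_closed_nbhd_def hc_adj_def hc_verts_def hdist_def le_Suc_eq)

lemma hdist_replicate_False: "hdist x (replicate (length x) False) = length (filter id x)"
  unfolding hdist_def length_filter_conv_card by (rule arg_cong[where f = card]) auto

lemma Q3_part_True:
  "Q3_part True = {[False, False, False], [True, True, False], [False, True, True], [True, False, True]}"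
proof -
  have "x \<in> Q3_part True \<longleftrightarrow> x \<in> {[False, False, False], [True, True, False], [False, True, True], [True, False, True]}"
    for x
  proof (cases "length x = 3")
    case True
    then have "hdist x (replicate 3 False) = length (filter id x)"
      using hdist_replicate_False[of x] by simp
    moreover obtain a b c where "x = [a, b, c]"
      using True by (auto simp: numeral_3_eq_3 length_Suc_conv)
    ultimately show ?thesis
      by (cases a; cases b; cases c) (simp_all add: Q3_part_def hc_verts_def)
  qed (auto simp: Q3_part_def hc_verts_def)
  then show ?thesis by blast
qed

text \<open>The subcube of Q_n through x spanned by the coordinates g 0, ..., g (m - 1),
  parametrised by Q_m.\<close>
definition subcube_map :: "bool list \<Rightarrow> (nat \<Rightarrow> nat) \<Rightarrow> bool list \<Rightarrow> bool list" where
  "subcube_map x g y = flip_coords x (g ` diff_coords (replicate (length y) False) y)"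

lemma hdist_subcube_map:
  assumes g: "inj_on g {..<m}" "g ` {..<m} \<subseteq> {..<length x}" and "length y = m" "length z = m"
  shows "hdist (subcube_map x g y) (subcube_map x g z) = hdist y z"
proof -
  let ?o = "replicate m False"
  let ?Y = "diff_coords ?o y" and ?Z = "diff_coords ?o z"
  have YZ: "?Y \<subseteq> {..<m}" "?Z \<subseteq> {..<m}"
    using diff_coords_subset[of ?o] by auto
  then have "g ` ?Y \<subseteq> {..<length x}" "g ` ?Z \<subseteq> {..<length x}"
    using g(2) by blast+
  then have "hdist (subcube_map x g y) (subcube_map x g z) = card (sym_diff (g ` ?Y) (g ` ?Z))"
    using assms by (simp add: subcube_map_def hdist_flip_coords)
  also have "sym_diff (g ` ?Y) (g ` ?Z) = g ` sym_diff ?Y ?Z"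
  proof -
    have "g ` (?Y - ?Z) = g ` ?Y - g ` ?Z" "g ` (?Z - ?Y) = g ` ?Z - g ` ?Y"
      using YZ by (auto intro!: inj_on_image_set_diff[OF g(1)])
    then show ?thesis by (simp add: image_Un)
  qed
  also have "card \<dots> = card (sym_diff ?Y ?Z)"
    using YZ by (intro card_image inj_on_subset[OF g(1)]) auto
  also have "\<dots> = hdist y z"
    using assms diff_coords_eq_sym_diff[of y ?o z] by (simp add: hdist_eq_card_diff_coords)
  finally show ?thesis .
qed

lemma hc_Q3_embedding_if_isometric:
  assumes "f ` hc_verts 3 \<subseteq> hc_verts n"
    and "\<And>y z. y \<in> hc_verts 3 \<Longrightarrow> z \<in> hc_verts 3 \<Longrightarrow> hdist (f y) (f z) = hdist y z"
  shows "hc_Q3_embedding n f"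
  unfolding hc_Q3_embedding_def
proof (intro conjI ballI impI inj_onI)
  fix y z assume yz: "y \<in> hc_verts 3" "z \<in> hc_verts 3" and "f y = f z"
  then have "hdist y z = 0"
    using assms(2)[OF yz] hdist_eq_0_iff[of "f z" "f z"] by simp
  then show "y = z"
    using yz hdist_eq_0_iff[of y z] by (simp add: hc_verts_def)
qed (use assms in \<open>auto simp: hc_adj_def\<close>)

lemma hc_square_flip_coords:
  assumes "length x = n" "i < n" "j < n" "i \<noteq> j"
  shows "hc_square n (flip_coords x ` {{}, {i}, {j}, {i, j}})"
proof -
  have sub: "{} \<in> Pow {..<length x}" "{i} \<in> Pow {..<length x}" "{j} \<in> Pow {..<length x}"
    "{i, j} \<in> Pow {..<length x}"
    using assms by auto
  have "distinct [flip_coords x {}, flip_coords x {i}, flip_coords x {i, j}, flip_coords x {j}]"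
    using inj_on_eq_iff[OF inj_on_flip_coords] sub assms(4) by (auto simp: doubleton_eq_iff)
  moreover have "hc_adj (flip_coords x {}) (flip_coords x {i})"
    "hc_adj (flip_coords x {i}) (flip_coords x {i, j})"
    "hc_adj (flip_coords x {i, j}) (flip_coords x {j})"
    "hc_adj (flip_coords x {j}) (flip_coords x {})"
    using sub assms(4) by (simp_all add: hc_adj_def hdist_flip_coords insert_Diff_if)
  ultimately show ?thesis
    unfolding hc_square_def using assms(1)
    by (intro exI[of _ "flip_coords x {}"] exI[of _ "flip_coords x {i}"]
        exI[of _ "flip_coords x {i, j}"] exI[of _ "flip_coords x {j}"])
      (auto simp: hc_verts_def insert_commute)
qed

lemma hc_Q3_half_flip_coords:
  assumes "length x = n" "i < n" "j < n" "k < n" "i \<noteq> j" "j \<noteq> k" "i \<noteq> k"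
  shows "hc_Q3_half n (flip_coords x ` {{}, {i, j}, {j, k}, {i, k}})"
proof -
  define g where "g = (!) [i, j, k]"
  have g: "inj_on g {..<3}" "g ` {..<3} \<subseteq> {..<length x}"
    using assms by (auto simp: inj_on_def g_def numeral_3_eq_3 less_Suc_eq)
  have "hc_Q3_embedding n (subcube_map x g)"
  proof (rule hc_Q3_embedding_if_isometric)
    show "subcube_map x g ` hc_verts 3 \<subseteq> hc_verts n"
      using assms(1) by (auto simp: subcube_map_def hc_verts_def)
  qed (use hdist_subcube_map[OF g] in \<open>simp add: hc_verts_def\<close>)
  moreover have "subcube_map x g ` Q3_part True = flip_coords x ` {{}, {i, j}, {j, k}, {i, k}}"
  proof -
    have "diff_coords [False, False, False] [True, True, False] = {0, 1}"
      "diff_coords [False, False, False] [False, True, True] = {1, 2}"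
      "diff_coords [False, False, False] [True, False, True] = {0, 2}"
      by (auto simp: diff_coords_def numeral_3_eq_3 less_Suc_eq)
    then show ?thesis
      unfolding Q3_part_True by (simp add: subcube_map_def g_def diff_coords_def)
  qed
  moreover have "card (flip_coords x ` {{}, {i, j}, {j, k}, {i, k}}) = 4"
  proof -
    have "inj_on (flip_coords x) {{}, {i, j}, {j, k}, {i, k}}"
      using assms by (intro inj_on_subset[OF inj_on_flip_coords]) auto
    then show ?thesis
      using assms by (simp add: card_image doubleton_eq_iff)
  qed
  ultimately show ?thesis
    unfolding hc_Q3_half_def by metis
qed

lemma flip_coords_image_diff_coords:
  assumes "S \<subseteq> hc_verts (length x)"
  shows "flip_coords x ` diff_coords x ` S = S"
proof -
  have "flip_coords x (diff_coords x u) = u" if "u \<in> S" for u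
    using that assms by (simp add: flip_coords_diff_coords hc_verts_def subset_eq)
  then show ?thesis by (simp add: image_image)
qed

lemma sym_diff_diameter_2_diff_coords:
  assumes "x \<in> S" "S \<subseteq> hc_verts n" "\<forall>u\<in>S. \<forall>w\<in>S. hdist u w \<le> 2"
  shows "sym_diff_diameter_2 (diff_coords x ` S)"
proof
  have "diff_coords x x = {}"
    by (simp add: diff_coords_def)
  then show "{} \<in> diff_coords x ` S"
    using assms(1) by (metis image_eqI)
next
  show "finite A" if "A \<in> diff_coords x ` S" for A
    using that by auto
next
  fix A B assume "A \<in> diff_coords x ` S" "B \<in> diff_coords x ` S"
  then obtain u w where uw: "u \<in> S" "w \<in> S" and "A = diff_coords x u" "B = diff_coords x w"
    by blast
  moreover have "length u = length x" "length w = length x"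
    using assms(1,2) uw by (auto simp: hc_verts_def)
  ultimately have "card (sym_diff A B) = hdist u w"
    by (simp add: hdist_eq_card_diff_coords[of u w] diff_coords_eq_sym_diff[of u x w])
  then show "card (sym_diff A B) \<le> 2"
    using assms(3) uw by simp
qed

lemma obtain_coordinate_family:
  assumes "x \<in> S" "S \<subseteq> hc_verts n" "\<forall>u\<in>S. \<forall>w\<in>S. hdist u w \<le> 2"
  obtains F where "S = flip_coords x ` F" "F \<subseteq> Pow {..<n}" "sym_diff_diameter_2 F"
proof
  have "length x = n"
    using assms(1,2) by (auto simp: hc_verts_def)
  then show "S = flip_coords x ` diff_coords x ` S"
    using assms(2) by (simp add: flip_coords_image_diff_coords)
  show "diff_coords x ` S \<subseteq> Pow {..<n}"
    using diff_coords_subset \<open>length x = n\<close> by blast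
qed (use sym_diff_diameter_2_diff_coords assms in blast)

lemma ex_hc_closed_nbhd_flip_coords:
  assumes "length x = n" "F \<subseteq> Pow {..<n}" "C \<subseteq> \<Union>F" "\<forall>A\<in>F. card (sym_diff A C) \<le> 1"
  shows "\<exists>v\<in>hc_verts n. flip_coords x ` F \<subseteq> hc_closed_nbhd n v"
proof
  show "flip_coords x C \<in> hc_verts n"
    using assms(1) by (simp add: hc_verts_def)
  show "flip_coords x ` F \<subseteq> hc_closed_nbhd n (flip_coords x C)"
  proof
    fix u assume "u \<in> flip_coords x ` F"
    then obtain A where "A \<in> F" "u = flip_coords x A" by blast
    moreover have "C \<subseteq> {..<n}"
      using assms(2,3) by blast
    ultimately show "u \<in> hc_closed_nbhd n (flip_coords x C)"
      using assms \<open>flip_coords x C \<in> hc_verts n\<close>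
      by (auto simp: mem_hc_closed_nbhd_iff hc_verts_def hdist_flip_coords)
  qed
qed

theorem proposition6p4:
  fixes n :: nat and S :: "bool list set"
  assumes "0 < n"
    and "S \<subseteq> hc_verts n"
    and "\<forall>x\<in>S. \<forall>y\<in>S. hdist x y \<le> 2"
  shows "(\<exists>v\<in>hc_verts n. S \<subseteq> hc_closed_nbhd n v) \<or> hc_square n S \<or> hc_Q3_half n S"
proof (cases "S = {}")
  case True
  have "replicate n False \<in> hc_verts n"
    by (simp add: hc_verts_def)
  with True show ?thesis by blast
next
  case False
  then obtain x where "x \<in> S" by blast
  with assms(2) have x: "length x = n" by (auto simp: hc_verts_def)
  obtain F where S_eq: "S = flip_coords x ` F" and F_sub: "F \<subseteq> Pow {..<n}"
    and "sym_diff_diameter_2 F"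
    using obtain_coordinate_family \<open>x \<in> S\<close> assms(2,3) by metis
  from sym_diff_diameter_2.center_or_square_or_triangle[OF this(3)] show ?thesis
  proof (elim disjE exE conjE)
    fix C assume "C \<subseteq> \<Union>F" "\<forall>A\<in>F. card (sym_diff A C) \<le> 1"
    then show ?thesis
      using ex_hc_closed_nbhd_flip_coords[OF x F_sub] by (simp add: S_eq)
  next
    fix i j assume "i \<noteq> j" "F = {{}, {i}, {j}, {i, j}}"
    then show ?thesis
      using hc_square_flip_coords[OF x, of i j] F_sub by (simp add: S_eq)
  next
    fix i j k assume "i \<noteq> j" "j \<noteq> k" "i \<noteq> k" "F = {{}, {i, j}, {j, k}, {i, k}}"
    then show ?thesis
      using hc_Q3_half_flip_coords[OF x, of i j k] F_sub by (simp add: S_eq)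
  qed
qed

end
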